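(* Let $n\geq2$, $A\in\mathrm{SL}_n(\mathbb Z)$, $B=(b_{ij})\in M_n(\mathbb R)$ with $\exp(B)=A$, and $M=\Gamma\backslash G(B)$ as in the context. Let $g$ be a homogeneous metric on $M$ for which $(V_1,\dots,V_n,Y)$ is an orthonormal frame, where $V_1,\dots,V_n$ is a basis of the space of left-invariant vertical fields $\mathrm{span}(X_1,\dots,X_n)$, let $C$ be the matrix of the endomorphism $f:X\mapsto[Y,X]$ of $\mathrm{span}(X_1,\dots,X_n)$ in the basis $(V_1,\dots,V_n)$, and let $a$ be the supremum of the absolute value of the sectional curvature of $(M,g)$. There exist constants $\tau(n)>0$ and $\kappa(B)$ such that $$\tau^{-1}a\leq \operatorname{Tr}(C\,{}^tC)\leq\tau a+\kappa.$$
   Context: $G=G(B)$ is the image of $(x_1,\dots,x_n,y)\in\mathbb R^{n+1}\mapsto\begin{pmatrix}\exp(yB)&0&x\\0&1&y\\0&0&1\end{pmatrix}\in\mathrm{GL}_{n+2}(\mathbb R)$ (blocks of sizes $n,1,1$), $\Gamma$ is the image of $\mathbb Z^{n+1}$. $X_1,\dots,X_n,Y$ are the left-invariant fields on $G$ (descending to $M$) generated at the identity by $\partial/\partial x_i,\partial/\partial y$; they satisfy $[X_i,X_j]=0$, $[Y,X_i]=\sum_j b_{ji}X_j$, so $f$ has matrix $B$ in the basis $(X_i)$. A homogeneous metric is one induced by a left-invariant metric on $G$. *)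

theory Defs
  imports "HOL-Analysis.Analysis"
begin

definition mat_pow :: "real^'n^'n \<Rightarrow> nat \<Rightarrow> real^'n^'n" where
  "mat_pow M k = ((\<lambda>X. X ** M) ^^ k) (mat 1)"

definition mat_exp :: "real^'n^'n \<Rightarrow> real^'n^'n" where
  "mat_exp M = (\<Sum>k. (1 / fact k) *\<^sub>R mat_pow M k)"

definition in_SL_Z :: "real^'n^'n \<Rightarrow> bool" where
  "in_SL_Z A \<longleftrightarrow> (\<forall>i j. A $ i $ j \<in> \<int>) \<and> det A = 1"

text \<open>br is the Lie bracket of left-invariant fields, g the (constant) inner product.
  Levi-Civita connection on left-invariant fields via the Koszul formula.\<close>

definition lc_conn :: "('v::real_vector \<Rightarrow> 'v \<Rightarrow> 'v) \<Rightarrow> ('v \<Rightarrow> 'v \<Rightarrow> real) \<Rightarrow> 'v \<Rightarrow> 'v \<Rightarrow> 'v" where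
  "lc_conn br g X Y =
     (THE W. \<forall>Z. g W Z = (g (br X Y) Z - g (br Y Z) X + g (br Z X) Y) / 2)"

definition curv_tensor :: "('v::real_vector \<Rightarrow> 'v \<Rightarrow> 'v) \<Rightarrow> ('v \<Rightarrow> 'v \<Rightarrow> real) \<Rightarrow> 'v \<Rightarrow> 'v \<Rightarrow> 'v \<Rightarrow> 'v" where
  "curv_tensor br g X Y Z =
     lc_conn br g X (lc_conn br g Y Z) - lc_conn br g Y (lc_conn br g X Z)
     - lc_conn br g (br X Y) Z"

definition sec_curv :: "('v::real_vector \<Rightarrow> 'v \<Rightarrow> 'v) \<Rightarrow> ('v \<Rightarrow> 'v \<Rightarrow> real) \<Rightarrow> 'v \<Rightarrow> 'v \<Rightarrow> real" where
  "sec_curv br g X Y = g (curv_tensor br g X Y Y) X / (g X X * g Y Y - (g X Y)^2)"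

definition sup_abs_sec_curv :: "('v::real_vector \<Rightarrow> 'v \<Rightarrow> 'v) \<Rightarrow> ('v \<Rightarrow> 'v \<Rightarrow> real) \<Rightarrow> real" where
  "sup_abs_sec_curv br g =
     Sup {\<bar>sec_curv br g X Y\<bar> | X Y. g X X * g Y Y - (g X Y)^2 \<noteq> 0}"

text \<open>An element (x, s) stands for x_1 X_1 + ... + x_n X_n + s Y.
  [X_i,X_j] = 0 and [Y, X_i] = sum_j b_ji X_j, i.e. [Y, x] = B *v x.\<close>
definition solv_bracket :: "real^'n^'n \<Rightarrow> ((real^'n) \<times> real) \<Rightarrow> ((real^'n) \<times> real) \<Rightarrow> ((real^'n) \<times> real)" where
  "solv_bracket B u w = (snd u *\<^sub>R (B *v fst w) - snd w *\<^sub>R (B *v fst u), 0)"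

definition frame_matrix :: "('n \<Rightarrow> real^'n) \<Rightarrow> real^'n^'n" where
  "frame_matrix V = (\<chi> i j. V j $ i)"

text \<open>The left-invariant metric for which (V_1,...,V_n,Y) is orthonormal.\<close>
definition frame_metric :: "('n::finite \<Rightarrow> real^'n) \<Rightarrow> ((real^'n) \<times> real) \<Rightarrow> ((real^'n) \<times> real) \<Rightarrow> real" where
  "frame_metric V u w =
     (matrix_inv (frame_matrix V) *v fst u) \<bullet> (matrix_inv (frame_matrix V) *v fst w)
     + snd u * snd w"

end

theory Submission
  imports Defs
begin

text \<open>
  Passing to coordinates with respect to the frame \<open>(V\<^sub>1, \<dots>, V\<^sub>n, Y)\<close> is a linear isometry
  onto \<open>\<real>\<^sup>n \<times> \<real>\<close> with its standard inner product, and it carries the bracket of \<open>B\<close> to that of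
  \<open>C\<close>; so one may work in the orthonormal model with bracket \<open>[Y, x] = C x\<close>. There the
  Levi-Civita connection is explicit in the symmetric and skew parts \<open>S\<close>, \<open>K\<close> of \<open>C\<close>, every
  term of the curvature tensor is bounded by a multiple of \<open>|C|\<^sup>2 = Tr(C \<^sup>tC)\<close>, and after a
  Gram-Schmidt step every sectional curvature is bounded by \<open>24 |C|\<^sup>2\<close>. Conversely, the
  sectional curvatures of the planes \<open>(X\<^sub>i, Y)\<close> add up to \<open>-Tr(S\<^sup>2)\<close>, and
  \<open>Tr(C \<^sup>tC) = 2 Tr(S\<^sup>2) - Tr(C\<^sup>2)\<close> where \<open>Tr(C\<^sup>2) = Tr(B\<^sup>2)\<close> because \<open>C\<close> is similar to \<open>B\<close>.
  So \<open>\<tau> = 24 + 2n\<close> and \<open>\<kappa> = -Tr(B\<^sup>2)\<close> will do.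
\<close>

section \<open>Curvature under linear isometries\<close>

lemma lc_conn_pullback:
  fixes \<Phi> :: "'a::real_vector \<Rightarrow> 'b::real_inner"
  assumes "bij \<Phi>"
    and metric: "\<And>u w. g u w = \<Phi> u \<bullet> \<Phi> w"
    and bracket: "\<And>u w. \<Phi> (br u w) = br' (\<Phi> u) (\<Phi> w)"
    and koszul: "\<And>X Y Z. 2 * (D X Y \<bullet> Z) = br' X Y \<bullet> Z - br' Y Z \<bullet> X + br' Z X \<bullet> Y"
  shows "\<Phi> (lc_conn br g X Y) = D (\<Phi> X) (\<Phi> Y)"
proof -
  define N where "N = D (\<Phi> X) (\<Phi> Y)"
  have "(\<forall>Z. g W Z = (g (br X Y) Z - g (br Y Z) X + g (br Z X) Y) / 2) \<longleftrightarrow> W = inv \<Phi> N" for W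
  proof -
    have "(\<forall>Z. g W Z = (g (br X Y) Z - g (br Y Z) X + g (br Z X) Y) / 2) \<longleftrightarrow>
        (\<forall>Z. \<Phi> W \<bullet> \<Phi> Z = N \<bullet> \<Phi> Z)"
      unfolding N_def by (simp add: metric bracket flip: koszul)
    also have "\<dots> \<longleftrightarrow> (\<forall>Z. \<Phi> W \<bullet> Z = N \<bullet> Z)"
      by (metis \<open>bij \<Phi>\<close> bij_betw_imp_surj_on surjD)
    also have "\<dots> \<longleftrightarrow> W = inv \<Phi> N"
      by (metis vector_eq_rdot \<open>bij \<Phi>\<close> bij_inv_eq_iff)
    finally show ?thesis .
  qed
  then have "lc_conn br g X Y = inv \<Phi> N"
    unfolding lc_conn_def by simp
  then show ?thesis
    unfolding N_def by (simp add: \<open>bij \<Phi>\<close> bij_inv_eq_iff)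
qed

lemma lc_conn_eqI:
  fixes D :: "'a::real_inner \<Rightarrow> 'a \<Rightarrow> 'a"
  assumes "\<And>X Y Z. 2 * (D X Y \<bullet> Z) = br X Y \<bullet> Z - br Y Z \<bullet> X + br Z X \<bullet> Y"
  shows "lc_conn br (\<bullet>) = D"
  using lc_conn_pullback[of id "(\<bullet>)" br br] assms by (simp add: fun_eq_iff)

lemma sec_curv_pullback:
  fixes \<Phi> :: "'a::real_vector \<Rightarrow> 'b::real_inner"
  assumes "bij \<Phi>" "linear \<Phi>"
    and metric: "\<And>u w. g u w = \<Phi> u \<bullet> \<Phi> w"
    and bracket: "\<And>u w. \<Phi> (br u w) = br' (\<Phi> u) (\<Phi> w)"
    and conn: "\<And>X Y Z. 2 * (D X Y \<bullet> Z) = br' X Y \<bullet> Z - br' Y Z \<bullet> X + br' Z X \<bullet> Y"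
  shows "sec_curv br g X Y = sec_curv br' (\<bullet>) (\<Phi> X) (\<Phi> Y)"
proof -
  have lc: "\<Phi> (lc_conn br g X Y) = D (\<Phi> X) (\<Phi> Y)" for X Y
    using \<open>bij \<Phi>\<close> metric bracket conn by (rule lc_conn_pullback)
  have "\<Phi> (curv_tensor br g X Y Z) = curv_tensor br' (\<bullet>) (\<Phi> X) (\<Phi> Y) (\<Phi> Z)" for Z
    unfolding curv_tensor_def lc_conn_eqI[OF conn]
    by (simp add: linear_diff[OF \<open>linear \<Phi>\<close>] lc bracket)
  then show ?thesis
    unfolding sec_curv_def metric by simp
qed

lemma sup_abs_sec_curv_pullback:
  fixes \<Phi> :: "'a::real_vector \<Rightarrow> 'b::real_inner"
  assumes "bij \<Phi>" "linear \<Phi>"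
    and metric: "\<And>u w. g u w = \<Phi> u \<bullet> \<Phi> w"
    and bracket: "\<And>u w. \<Phi> (br u w) = br' (\<Phi> u) (\<Phi> w)"
    and conn: "\<And>X Y Z. 2 * (D X Y \<bullet> Z) = br' X Y \<bullet> Z - br' Y Z \<bullet> X + br' Z X \<bullet> Y"
  shows "sup_abs_sec_curv br g = sup_abs_sec_curv br' (\<bullet>)"
proof -
  have sec: "sec_curv br g X Y = sec_curv br' (\<bullet>) (\<Phi> X) (\<Phi> Y)" for X Y
    using assms by (rule sec_curv_pullback)
  have "surj \<Phi>"
    using \<open>bij \<Phi>\<close> bij_is_surj by blast
  then have "{\<bar>sec_curv br g X Y\<bar> | X Y. g X X * g Y Y - (g X Y)\<^sup>2 \<noteq> 0}
      = {\<bar>sec_curv br' (\<bullet>) X Y\<bar> | X Y. X \<bullet> X * (Y \<bullet> Y) - (X \<bullet> Y)\<^sup>2 \<noteq> 0}"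
    unfolding sec metric by (auto, metis surjD)
  then show ?thesis
    unfolding sup_abs_sec_curv_def by simp
qed

section \<open>The orthonormal model\<close>

definition sym_part :: "real^'n^'n \<Rightarrow> real^'n^'n" where
  "sym_part C = (1/2) *\<^sub>R (C + transpose C)"

definition skew_part :: "real^'n^'n \<Rightarrow> real^'n^'n" where
  "skew_part C = (1/2) *\<^sub>R (C - transpose C)"

definition solv_conn :: "real^'n^'n \<Rightarrow> (real^'n) \<times> real \<Rightarrow> (real^'n) \<times> real \<Rightarrow> (real^'n) \<times> real" where
  "solv_conn C U W =
     (snd U *\<^sub>R (skew_part C *v fst W) - snd W *\<^sub>R (sym_part C *v fst U), fst U \<bullet> (sym_part C *v fst W))"

lemma sym_part_plus_skew_part: "sym_part C + skew_part C = C"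
  unfolding sym_part_def skew_part_def by (simp add: vec_eq_iff field_simps)

lemma inner_sym_part: "x \<bullet> (sym_part C *v y) = (x \<bullet> (C *v y) + y \<bullet> (C *v x)) / 2"
  unfolding sym_part_def
  by (simp add: scaleR_matrix_vector_assoc[symmetric] matrix_vector_mult_add_rdistrib
      inner_add_right dot_lmul_matrix[symmetric] inner_commute[of x])

lemma inner_skew_part: "x \<bullet> (skew_part C *v y) = (x \<bullet> (C *v y) - y \<bullet> (C *v x)) / 2"
  unfolding skew_part_def
  by (simp add: scaleR_matrix_vector_assoc[symmetric] matrix_vector_mult_diff_rdistrib
      inner_diff_right dot_lmul_matrix[symmetric] inner_commute[of x])

lemma koszul_solv_conn:
  "2 * (solv_conn C U W \<bullet> Z) =
     solv_bracket C U W \<bullet> Z - solv_bracket C W Z \<bullet> U + solv_bracket C Z U \<bullet> W"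
  by (simp add: solv_conn_def solv_bracket_def inner_prod_def inner_diff_left inner_diff_right
      inner_sym_part inner_skew_part inner_commute[of "C *v _"] inner_commute[of "sym_part C *v _"]
      inner_commute[of "skew_part C *v _"] field_simps)

lemma lc_conn_solv: "lc_conn (solv_bracket C) (\<bullet>) = solv_conn C"
  by (rule lc_conn_eqI) (rule koszul_solv_conn)

lemma solv_conn_metric: "solv_conn C U W \<bullet> Z = - (W \<bullet> solv_conn C U Z)"
  by (simp add: solv_conn_def inner_prod_def inner_diff_left inner_diff_right
      inner_sym_part inner_skew_part inner_commute[of "C *v _"] inner_commute[of "sym_part C *v _"]
      inner_commute[of "skew_part C *v _"] field_simps)

lemma bilinear_solv_conn: "bilinear (solv_conn C)"
  unfolding bilinear_def solv_conn_def
  by (auto intro!: linearI simp: prod_eq_iff algebra_simps)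

lemma bilinear_solv_bracket: "bilinear (solv_bracket C)"
  unfolding bilinear_def solv_bracket_def
  by (auto intro!: linearI simp: prod_eq_iff algebra_simps)

lemma solv_bracket_self: "solv_bracket C U U = 0"
  unfolding solv_bracket_def by (simp add: prod_eq_iff)

lemma curv_tensor_solv:
  "curv_tensor (solv_bracket C) (\<bullet>) X Y Z =
     solv_conn C X (solv_conn C Y Z) - solv_conn C Y (solv_conn C X Z) - solv_conn C (solv_bracket C X Y) Z"
  unfolding curv_tensor_def lc_conn_solv ..

lemma inner_curv_solv_shear:
  "curv_tensor (solv_bracket C) (\<bullet>) X (Y - c *\<^sub>R X) (Y - c *\<^sub>R X) \<bullet> X =
   curv_tensor (solv_bracket C) (\<bullet>) X Y Y \<bullet> X"
proof -
  let ?R = "curv_tensor (solv_bracket C) (\<bullet>)"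
  note bil = bilinear_solv_conn bilinear_solv_bracket
  have R_self: "?R X X Z = 0" for Z
    unfolding curv_tensor_solv by (simp add: solv_bracket_self bilinear_lzero[OF bilinear_solv_conn])
  have R_skew: "?R X Y Z \<bullet> Z = 0" for Z
  proof -
    have "solv_conn C (solv_bracket C X Y) Z \<bullet> Z = 0"
      using solv_conn_metric[of C _ Z Z] by (simp add: inner_commute)
    then show ?thesis
      by (simp only: curv_tensor_solv inner_diff_left solv_conn_metric[of C X _ Z]
          solv_conn_metric[of C Y _ Z] inner_commute[of "solv_conn C Y Z"])
  qed
  have "?R X (Y - c *\<^sub>R X) Z = ?R X Y Z" for Z
    using R_self[of Z] unfolding curv_tensor_solv
    by (simp add: bil[THEN bilinear_rsub] bil[THEN bilinear_lsub] bil[THEN bilinear_rmul] bil[THEN bilinear_lmul]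
        solv_bracket_self bilinear_lzero[OF bilinear_solv_conn])
  moreover have "?R X Y (Y - c *\<^sub>R X) = ?R X Y Y - c *\<^sub>R ?R X Y X"
    unfolding curv_tensor_solv
    by (simp add: bil[THEN bilinear_rsub] bil[THEN bilinear_rmul] algebra_simps)
  ultimately show ?thesis
    using R_skew[of X] by (simp add: inner_diff_left)
qed

section \<open>Upper bound on the curvature\<close>

lemma power2_norm_vec: "(norm (x :: 'a::real_normed_vector^'n))\<^sup>2 = (\<Sum>i\<in>UNIV. (norm (x $ i))\<^sup>2)"
  unfolding norm_vec_def[of x] L2_set_def by (simp add: sum_nonneg)

lemma trace_mult_transpose: "trace (A ** transpose B) = A \<bullet> (B :: real^'m^'n)"
  by (simp add: trace_def matrix_matrix_mult_def transpose_def inner_vec_def)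

lemma trace_mult_transpose_self: "trace (A ** transpose A) = (norm (A :: real^'m^'n))\<^sup>2"
  by (simp add: trace_mult_transpose power2_norm_eq_inner)

lemma norm_transpose: "norm (transpose (A :: real^'n^'n)) = norm A"
proof -
  have "(norm (transpose A))\<^sup>2 = (norm A)\<^sup>2"
    by (simp only: trace_mult_transpose_self[symmetric] transpose_transpose trace_mul_sym[of "transpose A"])
  then show ?thesis
    by simp
qed

lemma norm_matrix_vector_mult_le: "norm (A *v x) \<le> norm (A :: real^'m^'n) * norm x"
proof -
  have "(norm (A *v x))\<^sup>2 = (\<Sum>i\<in>UNIV. (A $ i \<bullet> x)\<^sup>2)"
    by (simp add: power2_norm_vec matrix_mult_dot)
  also have "\<dots> \<le> (\<Sum>i\<in>UNIV. (norm (A $ i))\<^sup>2 * (norm x)\<^sup>2)"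
  proof (rule sum_mono)
    fix i
    have "\<bar>A $ i \<bullet> x\<bar>\<^sup>2 \<le> (norm (A $ i) * norm x)\<^sup>2"
      by (rule power_mono[OF Cauchy_Schwarz_ineq2]) simp
    then show "(A $ i \<bullet> x)\<^sup>2 \<le> (norm (A $ i))\<^sup>2 * (norm x)\<^sup>2"
      by (simp add: power_mult_distrib)
  qed
  also have "\<dots> = (norm A * norm x)\<^sup>2"
    by (simp add: power2_norm_vec[of A] power_mult_distrib sum_distrib_right)
  finally show ?thesis
    by (rule power2_le_imp_le) simp
qed

lemma norm_sym_part_le: "norm (sym_part C) \<le> norm C"
  unfolding sym_part_def using norm_triangle_ineq[of C "transpose C"] by (simp add: norm_transpose)

lemma norm_skew_part_le: "norm (skew_part C) \<le> norm C"
  unfolding skew_part_def using norm_triangle_ineq4[of C "transpose C"] by (simp add: norm_transpose)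

lemma norm_fst_le_norm: "norm (fst p) \<le> norm p"
  using norm_fst_le[where x="fst p" and y="snd p"] by simp

lemma norm_snd_le_norm: "norm (snd p) \<le> norm p"
  using norm_snd_le[where x="fst p" and y="snd p"] by simp

lemma norm_snd_scaleR_matrix_vector_fst_le:
  assumes "norm A \<le> c"
  shows "norm (snd U *\<^sub>R (A *v fst W)) \<le> c * norm U * norm (W :: (real^'n) \<times> real)"
proof -
  have "norm (snd U *\<^sub>R (A *v fst W)) = \<bar>snd U\<bar> * norm (A *v fst W)"
    by simp
  also have "\<dots> \<le> norm U * (c * norm W)"
    using assms norm_snd_le_norm[of U] norm_fst_le_norm[of W]
    by (intro mult_mono order_trans[OF norm_matrix_vector_mult_le] mult_mono') auto
  finally show ?thesis
    by (simp add: ac_simps)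
qed

lemma norm_solv_bracket_le: "norm (solv_bracket C U W) \<le> 2 * norm C * norm U * norm W"
proof -
  have "norm (solv_bracket C U W) \<le> norm (snd U *\<^sub>R (C *v fst W)) + norm (snd W *\<^sub>R (C *v fst U))"
    unfolding solv_bracket_def by (simp del: norm_scaleR add: norm_triangle_ineq4)
  then show ?thesis
    using norm_snd_scaleR_matrix_vector_fst_le[of C "norm C" U W]
      norm_snd_scaleR_matrix_vector_fst_le[of C "norm C" W U]
    by (simp add: ac_simps)
qed

lemma norm_solv_conn_le: "norm (solv_conn C U W) \<le> 3 * norm C * norm U * norm W"
proof -
  have "norm (solv_conn C U W) \<le>
      norm (snd U *\<^sub>R (skew_part C *v fst W)) + norm (snd W *\<^sub>R (sym_part C *v fst U))
      + \<bar>fst U \<bullet> (sym_part C *v fst W)\<bar>"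
    unfolding solv_conn_def
    by (rule order_trans[OF norm_Pair_le]) (simp del: norm_scaleR add: norm_triangle_ineq4)
  moreover have "norm (snd U *\<^sub>R (skew_part C *v fst W)) \<le> norm C * norm U * norm W"
    by (rule norm_snd_scaleR_matrix_vector_fst_le[OF norm_skew_part_le])
  moreover have "norm (snd W *\<^sub>R (sym_part C *v fst U)) \<le> norm C * norm W * norm U"
    by (rule norm_snd_scaleR_matrix_vector_fst_le[OF norm_sym_part_le])
  moreover have "\<bar>fst U \<bullet> (sym_part C *v fst W)\<bar> \<le> norm C * norm U * norm W"
  proof -
    have "\<bar>fst U \<bullet> (sym_part C *v fst W)\<bar> \<le> norm (fst U) * (norm (sym_part C) * norm (fst W))"
      by (rule order_trans[OF Cauchy_Schwarz_ineq2 mult_left_mono[OF norm_matrix_vector_mult_le]]) simp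
    also have "\<dots> \<le> norm U * (norm C * norm W)"
      using norm_fst_le_norm[of U] norm_fst_le_norm[of W] norm_sym_part_le[of C]
      by (intro mult_mono) auto
    finally show ?thesis
      by (simp add: ac_simps)
  qed
  ultimately show ?thesis
    by (simp add: ac_simps)
qed

lemma norm_curv_solv_le:
  "norm (curv_tensor (solv_bracket C) (\<bullet>) X Y Z) \<le> 24 * (norm C)\<^sup>2 * norm X * norm Y * norm Z"
proof -
  let ?c = "norm C"
  have "norm (solv_conn C X (solv_conn C Y Z)) \<le> 3 * ?c * norm X * (3 * ?c * norm Y * norm Z)"
    by (rule order_trans[OF norm_solv_conn_le]) (intro mult_left_mono norm_solv_conn_le; simp)
  moreover have "norm (solv_conn C Y (solv_conn C X Z)) \<le> 3 * ?c * norm Y * (3 * ?c * norm X * norm Z)"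
    by (rule order_trans[OF norm_solv_conn_le]) (intro mult_left_mono norm_solv_conn_le; simp)
  moreover have "norm (solv_conn C (solv_bracket C X Y) Z) \<le> 3 * ?c * (2 * ?c * norm X * norm Y) * norm Z"
    by (rule order_trans[OF norm_solv_conn_le]) (intro mult_right_mono mult_left_mono norm_solv_bracket_le; simp)
  moreover have "norm (curv_tensor (solv_bracket C) (\<bullet>) X Y Z) \<le>
      norm (solv_conn C X (solv_conn C Y Z)) + norm (solv_conn C Y (solv_conn C X Z))
      + norm (solv_conn C (solv_bracket C X Y) Z)"
    unfolding curv_tensor_solv by (intro order_trans[OF norm_triangle_ineq4] add_right_mono norm_triangle_ineq4)
  ultimately show ?thesis
    by (simp add: power2_eq_square algebra_simps)
qed

lemma abs_inner_le_gram:
  fixes R :: "'a::real_inner \<Rightarrow> 'a \<Rightarrow> 'a \<Rightarrow> 'a"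
  assumes bound: "\<And>X Y Z. norm (R X Y Z) \<le> M * norm X * norm Y * norm Z"
    and shear: "\<And>X Y c. R X (Y - c *\<^sub>R X) (Y - c *\<^sub>R X) \<bullet> X = R X Y Y \<bullet> X"
  shows "\<bar>R X Y Y \<bullet> X\<bar> \<le> M * (X \<bullet> X * (Y \<bullet> Y) - (X \<bullet> Y)\<^sup>2)"
proof (cases "X = 0")
  case True
  then show ?thesis by simp
next
  case False
  define Y' where "Y' = Y - (X \<bullet> Y / (X \<bullet> X)) *\<^sub>R X"
  have gram: "X \<bullet> X * (Y' \<bullet> Y') = X \<bullet> X * (Y \<bullet> Y) - (X \<bullet> Y)\<^sup>2"
    using False unfolding Y'_def
    by (simp add: inner_diff_left inner_diff_right inner_commute power2_eq_square field_simps)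
  have "\<bar>R X Y Y \<bullet> X\<bar> = \<bar>R X Y' Y' \<bullet> X\<bar>"
    unfolding Y'_def shear ..
  also have "\<dots> \<le> norm (R X Y' Y') * norm X"
    by (rule Cauchy_Schwarz_ineq2)
  also have "\<dots> \<le> M * norm X * norm Y' * norm Y' * norm X"
    by (intro mult_right_mono bound) simp
  also have "\<dots> = M * (X \<bullet> X * (Y' \<bullet> Y'))"
    by (simp add: power2_norm_eq_inner[symmetric] power2_eq_square)
  finally show ?thesis
    unfolding gram .
qed

lemma abs_sec_curv_solv_le: "\<bar>sec_curv (solv_bracket C) (\<bullet>) X Y\<bar> \<le> 24 * (norm C)\<^sup>2"
proof -
  let ?G = "X \<bullet> X * (Y \<bullet> Y) - (X \<bullet> Y)\<^sup>2"
  have "?G \<ge> 0"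
    using Cauchy_Schwarz_ineq[of X Y] by simp
  moreover have "\<bar>curv_tensor (solv_bracket C) (\<bullet>) X Y Y \<bullet> X\<bar> \<le> 24 * (norm C)\<^sup>2 * ?G"
    using norm_curv_solv_le inner_curv_solv_shear by (rule abs_inner_le_gram)
  ultimately show ?thesis
    unfolding sec_curv_def by (cases "?G = 0") (simp_all add: abs_div divide_le_eq)
qed

section \<open>Lower bound on the curvature\<close>

lemma matrix_vector_mult_axis: "(M *v axis j 1) $ i = M $ i $ (j :: 'n::finite)"
  by (simp add: matrix_vector_mult_def axis_def if_distrib cong: if_cong)

lemma sec_curv_solv_axis:
  fixes C :: "real^'n^'n"
  shows "sec_curv (solv_bracket C) (\<bullet>) (axis i 1, 0) (0, 1) = (skew_part C ** sym_part C - sym_part C ** C) $ i $ i"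
proof -
  have "curv_tensor (solv_bracket C) (\<bullet>) (x, 0) (0, 1) (0, 1) \<bullet> (x, 0) =
      x \<bullet> (skew_part C *v (sym_part C *v x)) - x \<bullet> (sym_part C *v (C *v x))" for x :: "real^'n"
    unfolding curv_tensor_solv solv_conn_def solv_bracket_def
    by (simp add: inner_diff_left inner_diff_right matrix_vector_mult_diff_distrib inner_commute
        linear_neg[OF matrix_vector_mul_linear])
  then show ?thesis
    by (simp add: sec_curv_def inner_axis_axis matrix_vector_mul_assoc inner_commute[of "axis i 1"]
        cart_eq_inner_axis[symmetric] matrix_vector_mult_axis matrix_vector_mult_diff_rdistrib)
qed

lemma sum_sec_curv_solv_axis:
  "(\<Sum>i\<in>UNIV. sec_curv (solv_bracket C) (\<bullet>) (axis i 1, 0) (0, 1)) = - trace (sym_part C ** sym_part C)"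
proof -
  have "(\<Sum>i\<in>UNIV. sec_curv (solv_bracket C) (\<bullet>) (axis i 1, 0) (0, 1))
      = trace (skew_part C ** sym_part C) - trace (sym_part C ** C)"
    by (simp add: sec_curv_solv_axis trace_def sum_subtractf)
  also have "trace (sym_part C ** C) = trace (sym_part C ** sym_part C) + trace (skew_part C ** sym_part C)"
    by (metis sym_part_plus_skew_part matrix_add_ldistrib trace_add trace_mul_sym)
  finally show ?thesis
    by simp
qed

lemma trace_mult_transpose_sym_part:
  "trace (C ** transpose C) = 2 * trace (sym_part C ** sym_part C) - trace (C ** (C :: real^'n^'n))"
proof -
  have "(\<Sum>i\<in>UNIV. \<Sum>k\<in>UNIV. C $ k $ i * C $ k $ i) = (\<Sum>i\<in>UNIV. \<Sum>k\<in>UNIV. C $ i $ k * C $ i $ k)"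
    by (rule sum.swap)
  moreover have "(\<Sum>i\<in>UNIV. \<Sum>k\<in>UNIV. C $ k $ i * C $ i $ k) = (\<Sum>i\<in>UNIV. \<Sum>k\<in>UNIV. C $ i $ k * C $ k $ i)"
    by (simp add: mult.commute)
  ultimately show ?thesis
    by (simp add: trace_def matrix_matrix_mult_def transpose_def sym_part_def sum.distrib
        algebra_simps flip: sum_distrib_left sum_divide_distrib)
qed

lemma abs_sec_curv_le_sup:
  assumes bound: "\<And>X Y. \<bar>sec_curv br g X Y\<bar> \<le> M"
    and "g X X * g Y Y - (g X Y)\<^sup>2 \<noteq> 0"
  shows "\<bar>sec_curv br g X Y\<bar> \<le> sup_abs_sec_curv br g"
  unfolding sup_abs_sec_curv_def
  by (rule cSup_upper) (use assms in \<open>auto intro!: bdd_aboveI[where M=M]\<close>)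

lemma sup_abs_sec_curv_le:
  assumes bound: "\<And>X Y. \<bar>sec_curv br g X Y\<bar> \<le> M"
    and "g X X * g Y Y - (g X Y)\<^sup>2 \<noteq> 0"
  shows "sup_abs_sec_curv br g \<le> M"
  unfolding sup_abs_sec_curv_def
  by (rule cSup_least) (use assms in auto)

lemma sup_abs_sec_curv_solv_le: "sup_abs_sec_curv (solv_bracket C) (\<bullet>) \<le> 24 * trace (C ** transpose C)"
  unfolding trace_mult_transpose_self
  by (rule sup_abs_sec_curv_le[where X="(axis undefined 1, 0)" and Y="(0, 1)"])
    (simp_all add: abs_sec_curv_solv_le inner_axis_axis)

lemma abs_sec_curv_solv_axis_le_sup:
  fixes C :: "real^'n^'n"
  shows "\<bar>sec_curv (solv_bracket C) (\<bullet>) (axis i 1, 0) (0, 1)\<bar> \<le> sup_abs_sec_curv (solv_bracket C) (\<bullet>)"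
  by (rule abs_sec_curv_le_sup[OF abs_sec_curv_solv_le]) (simp add: inner_axis_axis)

lemma trace_mult_transpose_le_sup_abs_sec_curv_solv:
  fixes C :: "real^'n^'n"
  shows "trace (C ** transpose C) \<le> 2 * real CARD('n) * sup_abs_sec_curv (solv_bracket C) (\<bullet>) - trace (C ** C)"
proof -
  have "trace (sym_part C ** sym_part C) = - (\<Sum>i\<in>UNIV. sec_curv (solv_bracket C) (\<bullet>) (axis i 1, 0) (0, 1))"
    by (simp add: sum_sec_curv_solv_axis)
  also have "\<dots> \<le> (\<Sum>i\<in>UNIV. \<bar>sec_curv (solv_bracket C) (\<bullet>) (axis i 1, 0) (0, 1)\<bar>)"
    by (rule order_trans[OF abs_ge_minus_self sum_abs])
  also have "\<dots> \<le> (\<Sum>i\<in>(UNIV :: 'n set). sup_abs_sec_curv (solv_bracket C) (\<bullet>))"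
    by (intro sum_mono abs_sec_curv_solv_axis_le_sup)
  finally show ?thesis
    unfolding trace_mult_transpose_sym_part by (simp add: mult.assoc)
qed

section \<open>Change of frame\<close>

lemma matrix_inv_right: "invertible A \<Longrightarrow> A ** matrix_inv A = mat 1"
  and matrix_inv_left: "invertible A \<Longrightarrow> matrix_inv A ** A = mat 1"
  unfolding invertible_def matrix_inv_def by (metis (mono_tags, lifting) someI_ex)+

lemma trace_similar:
  fixes P B C :: "'a::comm_ring_1^'n^'n"
  assumes "invertible P" "B ** P = P ** C"
  shows "trace C = trace B"
proof -
  have "C = matrix_inv P ** B ** P"
    by (metis assms matrix_inv_left matrix_mul_assoc matrix_mul_lid)
  also have "trace \<dots> = trace (B ** P ** matrix_inv P)"
    by (metis trace_mul_sym matrix_mul_assoc)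
  finally show ?thesis
    by (simp add: matrix_inv_right[OF assms(1)] flip: matrix_mul_assoc)
qed

lemma frame_matrix_mult:
  assumes "\<And>i. B *v V i = (\<Sum>j\<in>UNIV. C $ j $ i *\<^sub>R V j)"
  shows "B ** frame_matrix V = frame_matrix V ** C"
proof -
  have "(B ** frame_matrix V) $ k $ i = (B *v V i) $ k" for k i
    by (simp add: frame_matrix_def matrix_matrix_mult_def matrix_vector_mult_def)
  moreover have "(B *v V i) $ k = (frame_matrix V ** C) $ k $ i" for k i
    by (simp add: assms frame_matrix_def matrix_matrix_mult_def mult.commute)
  ultimately show ?thesis
    by (simp add: vec_eq_iff)
qed

lemma sup_abs_sec_curv_frame_metric:
  fixes B C :: "real^'n^'n"
  assumes "invertible (frame_matrix V)" "B ** frame_matrix V = frame_matrix V ** C"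
  shows "sup_abs_sec_curv (solv_bracket B) (frame_metric V) = sup_abs_sec_curv (solv_bracket C) (\<bullet>)"
proof -
  define Q where "Q = matrix_inv (frame_matrix V)"
  define \<Phi> :: "(real^'n) \<times> real \<Rightarrow> (real^'n) \<times> real" where "\<Phi> u = (Q *v fst u, snd u)" for u
  have QP: "Q ** frame_matrix V = mat 1" and PQ: "frame_matrix V ** Q = mat 1"
    unfolding Q_def using assms(1) by (simp_all add: matrix_inv_left matrix_inv_right)
  have QB: "Q ** B = C ** Q"
    by (metis PQ QP assms(2) matrix_mul_assoc matrix_mul_lid matrix_mul_rid)
  have "bij \<Phi>"
    by (rule o_bij[where g="\<lambda>u. (frame_matrix V *v fst u, snd u)"])
      (auto simp: \<Phi>_def fun_eq_iff matrix_vector_mul_assoc QP PQ)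
  moreover have "linear \<Phi>"
    unfolding \<Phi>_def by (auto intro!: linearI simp: matrix_vector_right_distrib matrix_vector_mult_scaleR)
  moreover have "frame_metric V u w = \<Phi> u \<bullet> \<Phi> w" for u w
    by (simp add: frame_metric_def \<Phi>_def Q_def inner_prod_def)
  moreover have "\<Phi> (solv_bracket B u w) = solv_bracket C (\<Phi> u) (\<Phi> w)" for u w
    by (simp add: \<Phi>_def solv_bracket_def matrix_vector_mult_diff_distrib matrix_vector_mult_scaleR
        matrix_vector_mul_assoc QB)
  ultimately show ?thesis
    using koszul_solv_conn by (rule sup_abs_sec_curv_pullback)
qed

lemma sup_abs_sec_curv_frame_metric_bounds:
  fixes B C :: "real^'n^'n"
  assumes "invertible (frame_matrix V)" "B ** frame_matrix V = frame_matrix V ** C"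
  defines "a \<equiv> sup_abs_sec_curv (solv_bracket B) (frame_metric V)"
  shows "0 \<le> a" and "a \<le> 24 * trace (C ** transpose C)"
    and "trace (C ** transpose C) \<le> 2 * real CARD('n) * a - trace (B ** B)"
proof -
  have a: "a = sup_abs_sec_curv (solv_bracket C) (\<bullet>)"
    unfolding a_def using assms(1,2) by (rule sup_abs_sec_curv_frame_metric)
  show "0 \<le> a"
    unfolding a using abs_sec_curv_solv_axis_le_sup[of C] abs_ge_zero order_trans by blast
  show "a \<le> 24 * trace (C ** transpose C)"
    unfolding a by (rule sup_abs_sec_curv_solv_le)
  have "B ** B ** frame_matrix V = frame_matrix V ** (C ** C)"
    by (metis assms(2) matrix_mul_assoc)
  with assms(1) have "trace (C ** C) = trace (B ** B)"
    by (rule trace_similar)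
  then show "trace (C ** transpose C) \<le> 2 * real CARD('n) * a - trace (B ** B)"
    unfolding a using trace_mult_transpose_le_sup_abs_sec_curv_solv[of C] by simp
qed

theorem mainTheorem8:
  assumes "CARD('n::finite) \<ge> 2"
  shows "\<exists>\<tau>::real. \<tau> > 0 \<and>
    (\<forall>(A::real^'n^'n) (B::real^'n^'n). in_SL_Z A \<and> mat_exp B = A \<longrightarrow>
      (\<exists>\<kappa>::real. \<forall>(V::'n \<Rightarrow> real^'n) (C::real^'n^'n).
         invertible (frame_matrix V) \<and>
         (\<forall>i. B *v V i = (\<Sum>j\<in>UNIV. C $ j $ i *\<^sub>R V j)) \<longrightarrow>
         (let a = sup_abs_sec_curv (solv_bracket B) (frame_metric V) in
            a / \<tau> \<le> trace (C ** transpose C) \<and>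
            trace (C ** transpose C) \<le> \<tau> * a + \<kappa>)))"
proof -
  let ?\<tau> = "24 + 2 * real CARD('n)"
  have key: "let a = sup_abs_sec_curv (solv_bracket B) (frame_metric V) in
      a / ?\<tau> \<le> trace (C ** transpose C) \<and> trace (C ** transpose C) \<le> ?\<tau> * a + - trace (B ** B)"
    if "invertible (frame_matrix V)" "\<forall>i. B *v V i = (\<Sum>j\<in>UNIV. C $ j $ i *\<^sub>R V j)"
    for B C :: "real^'n^'n" and V
  proof -
    define a where "a = sup_abs_sec_curv (solv_bracket B) (frame_metric V)"
    define t where "t = trace (C ** transpose C)"
    have "B ** frame_matrix V = frame_matrix V ** C"
      using that(2) by (simp add: frame_matrix_mult)
    from sup_abs_sec_curv_frame_metric_bounds[OF that(1) this]
    have "0 \<le> a" "a \<le> 24 * t" "t \<le> 2 * real CARD('n) * a - trace (B ** B)"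
      unfolding a_def t_def .
    moreover have "0 \<le> t"
      unfolding t_def trace_mult_transpose_self by simp
    ultimately have "a \<le> ?\<tau> * t" "t \<le> ?\<tau> * a + - trace (B ** B)"
      unfolding distrib_right by (simp_all add: add_increasing2)
    then show ?thesis
      unfolding Let_def a_def[symmetric] t_def[symmetric] by (simp add: divide_le_eq mult.commute)
  qed
  show ?thesis
    by (rule exI[of _ ?\<tau>]) (simp, blast intro: key)
qed

end
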